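(* If $M$ is a uniformly dense loopless matroid containing a circuit, then $\operatorname{gir}(M)\ge\rho(M)/(\rho(M)-1)$.
   Context: For a matroid on $E$, $\operatorname{rank}(A)=\max_B|A\cap B|$ over bases, $\rho(A)=|A|/\operatorname{rank}(A)$, $\rho(M)=\rho(E)$; $M$ is uniformly dense if $\rho(A)\le\rho(E)$ for all nonempty $A\subseteq E$. A circuit is a subset $C\subseteq E$ with $\operatorname{rank}(C)=|C|-1$ and $\operatorname{rank}(S)=|S|$ for every proper subset $S\subset C$; $\operatorname{gir}(M)$ is the size of a smallest circuit. *)

theory Defs
  imports Main Complex_Main
begin

text \<open>A (finite) matroid on ground set E, given by its family of bases Bs
  (basis-exchange axiom).\<close>
definition matroid :: "'a set \<Rightarrow> 'a set set \<Rightarrow> bool" where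
  "matroid E Bs \<longleftrightarrow> finite E \<and> Bs \<noteq> {} \<and> (\<forall>X\<in>Bs. X \<subseteq> E) \<and>
     (\<forall>X\<in>Bs. \<forall>Y\<in>Bs. \<forall>x\<in>X - Y. \<exists>y\<in>Y - X. insert y (X - {x}) \<in> Bs)"

definition mrank :: "'a set set \<Rightarrow> 'a set \<Rightarrow> nat" where
  "mrank Bs A = Max ((\<lambda>X. card (A \<inter> X)) ` Bs)"

definition density :: "'a set set \<Rightarrow> 'a set \<Rightarrow> real" where
  "density Bs A = real (card A) / real (mrank Bs A)"

definition uniformly_dense :: "'a set \<Rightarrow> 'a set set \<Rightarrow> bool" where
  "uniformly_dense E Bs \<longleftrightarrow> (\<forall>A. A \<subseteq> E \<and> A \<noteq> {} \<longrightarrow> density Bs A \<le> density Bs E)"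

definition loopless :: "'a set \<Rightarrow> 'a set set \<Rightarrow> bool" where
  "loopless E Bs \<longleftrightarrow> (\<forall>e\<in>E. mrank Bs {e} \<noteq> 0)"

text \<open>rank(C) = |C| - 1 (as integers, so C is nonempty) and every proper subset is independent.\<close>
definition circuit :: "'a set \<Rightarrow> 'a set set \<Rightarrow> 'a set \<Rightarrow> bool" where
  "circuit E Bs C \<longleftrightarrow> C \<subseteq> E \<and> mrank Bs C + 1 = card C \<and>
     (\<forall>S. S \<subset> C \<longrightarrow> mrank Bs S = card S)"

definition girth :: "'a set \<Rightarrow> 'a set set \<Rightarrow> nat" where
  "girth E Bs = Min (card ` {C. circuit E Bs C})"

end

theory Submission
  imports Defs
begin

text \<open>A smallest circuit C has rank |C| - 1, so uniform density gives
  |C| / (|C| - 1) \<le> \<rho>(M); looplessness makes |C| \<ge> 2, and inverting the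
  decreasing involution t \<mapsto> t / (t - 1) of (1, \<infinity>) yields |C| \<ge> \<rho>(M) / (\<rho>(M) - 1).\<close>

lemma girth_attained:
  assumes "finite E" and "\<exists>C. circuit E Bs C"
  obtains C where "circuit E Bs C" and "card C = girth E Bs"
proof -
  let ?sizes = "card ` {C. circuit E Bs C}"
  have "?sizes \<subseteq> {..card E}"
    using assms(1) by (auto simp: circuit_def intro: card_mono)
  then have "finite ?sizes"
    using finite_subset by blast
  moreover have "?sizes \<noteq> {}"
    using assms(2) by blast
  ultimately have "girth E Bs \<in> ?sizes"
    unfolding girth_def by (rule Min_in)
  then show ?thesis
    by (auto intro: that)
qed

lemma circuit_card_ge_2:
  assumes "loopless E Bs" and "circuit E Bs C"
  shows "card C \<ge> 2"
proof (rule ccontr)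
  assume "\<not> card C \<ge> 2"
  moreover have "mrank Bs C + 1 = card C" and "C \<subseteq> E"
    using assms(2) by (auto simp: circuit_def)
  ultimately have "card C = 1" and "mrank Bs C = 0" and "C \<subseteq> E"
    by linarith+
  then obtain e where "C = {e}" and "e \<in> E" and "mrank Bs {e} = 0"
    by (auto simp: card_Suc_eq)
  then show False
    using assms(1) by (auto simp: loopless_def)
qed

lemma density_circuit:
  assumes "circuit E Bs C"
  shows "density Bs C = real (card C) / (real (card C) - 1)"
proof -
  have rank: "mrank Bs C + 1 = card C"
    using assms by (simp add: circuit_def)
  then show ?thesis
    unfolding density_def by (simp flip: rank)
qed

lemma conjugate_exponent_le_swap:
  fixes x r :: real
  assumes "1 < x" and "x / (x - 1) \<le> r"
  shows "r / (r - 1) \<le> x"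
proof -
  have "x \<le> r * (x - 1)"
    using assms by (simp add: divide_le_eq)
  moreover have "r * (x - 1) \<le> x - 1" if "r \<le> 1"
    using that assms(1) by (simp add: mult_le_cancel_right1)
  ultimately have "1 < r"
    by fastforce
  with \<open>x \<le> r * (x - 1)\<close> show ?thesis
    by (simp add: divide_le_eq algebra_simps)
qed

theorem proposition3p9:
  assumes "matroid E Bs"
    and "uniformly_dense E Bs"
    and "loopless E Bs"
    and "\<exists>C. circuit E Bs C"
  shows "real (girth E Bs) \<ge> density Bs E / (density Bs E - 1)"
proof -
  have "finite E"
    using assms(1) by (simp add: matroid_def)
  then obtain C where C: "circuit E Bs C" and girth: "card C = girth E Bs"
    using assms(4) by (rule girth_attained)
  have "card C \<ge> 2"
    using assms(3) C by (rule circuit_card_ge_2)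
  then have "C \<noteq> {}" and "real (card C) > 1"
    by auto
  have "density Bs C \<le> density Bs E"
    using assms(2) C \<open>C \<noteq> {}\<close> by (simp add: uniformly_dense_def circuit_def)
  then have "real (card C) / (real (card C) - 1) \<le> density Bs E"
    by (simp only: density_circuit[OF C])
  with \<open>real (card C) > 1\<close> have "density Bs E / (density Bs E - 1) \<le> real (card C)"
    by (rule conjugate_exponent_le_swap)
  then show ?thesis
    by (simp add: girth)
qed

end
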